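(* Let $t_1, t_2 \in \mathsf{Topo}$ and let $f$ be an embedding of $t_1$ inside $t_2$. For every $q \in \mathsf{PIFOTree}(t_1)$, if $\mathsf{pop}(q) = (pkt, q')$, then $\mathsf{pop}(\widehat f(q)) = (pkt, \widehat f(q'))$.
   Context: Fix a set $\mathsf{Pkt}$ of packets and a totally ordered set $\mathsf{Rk}$ of ranks (smaller is more favorable). PIFOs: for a set $S$, a PIFO over $S$ is a finite sequence of pairs $(s,r)\in S\times\mathsf{Rk}$ in insertion order; $\mathsf{PIFO}(S)$ is the set of these. $\mathsf{pop}_{\mathsf{PIFO}}(p)$ is undefined if $p$ is empty; otherwise it removes the entry of minimal rank (earliest-inserted among ties) and returns $(s,p')$, its element and the rest. Topologies: $\mathsf{Topo}$ is the smallest set with $*\in\mathsf{Topo}$ and $\mathsf{Node}(\vec t)\in\mathsf{Topo}$ for $n\in\mathbb{N}$, $\vec t\in\mathsf{Topo}^n$. PIFO trees: $\mathsf{Leaf}(p)\in\mathsf{PIFOTree}( * )$ for $p\in\mathsf{PIFO}(\mathsf{Pkt})$; $\mathsf{Internal}(\vec q,p)\in\mathsf{PIFOTree}(\mathsf{Node}(\vec t))$ whenever $\vec t\in\mathsf{Topo}^n$, $p\in\mathsf{PIFO}(\{1,\dots,n\})$, $\vec q[i]\in\mathsf{PIFOTree}(\vec t[i])$. $\vec q[q'/i]$ replaces the $i$-th entry by $q'$. pop (partial): $\mathsf{pop}(\mathsf{Leaf}(p))=(pkt,\mathsf{Leaf}(p'))$ if $\mathsf{pop}_{\mathsf{PIFO}}(p)=(pkt,p')$;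 $\mathsf{pop}(\mathsf{Internal}(\vec q,p))=(pkt,\mathsf{Internal}(\vec q[q'/i],p'))$ if $\mathsf{pop}_{\mathsf{PIFO}}(p)=(i,p')$ and $\mathsf{pop}(\vec q[i])=(pkt,q')$; undefined otherwise. Addresses: $\mathsf{Addr}(t)\subseteq\mathbb{N}^*$ is the smallest set with $\epsilon\in\mathsf{Addr}(t)$ and $i\cdot\alpha\in\mathsf{Addr}(\mathsf{Node}(\vec t))$ for $1\le i\le n$, $\alpha\in\mathsf{Addr}(\vec t[i])$. Subtrees: $t/\epsilon=t$, $\mathsf{Node}(\vec t)/(i\cdot\alpha)=\vec t[i]/\alpha$. An embedding of $t_1$ in $t_2$ is an injective $f:\mathsf{Addr}(t_1)\to\mathsf{Addr}(t_2)$ with $f(\epsilon)=\epsilon$, $t_2/f(\alpha)=*$ whenever $t_1/\alpha=*$, and $\alpha$ a prefix of $\alpha'$ iff $f(\alpha)$ a prefix of $f(\alpha')$. If $t_1=*$ then $t_2=*$; if $t_1=\mathsf{Node}(\vec t_1)$, the map $f_i$ defined by $f(i\cdot\alpha)=f(i)\cdot f_i(\alpha)$ is an embedding of $t_1/i$ in $t_2/f(i)$. Lifting $\widehat f:\mathsf{PIFOTree}(t_1)\to\mathsf{PIFOTree}(t_2)$, by recursion on $t_1$: if $t_1=*$, $\widehat f(q)=q$. If $t_1=\mathsf{Node}(\vec t_1)$ with $n$ children and $q=\mathsf{Internal}(\vec q,p)$, define for each address $\alpha$ of $t_2$ that is a prefix of some $f(i)$ a tree $\widehat f(q)_\alpha\in\mathsf{PIFOTree}(t_2/\alpha)$,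 from longer to shorter $\alpha$: if $\alpha=f(i)$, $\widehat f(q)_\alpha=\widehat{f_i}(\vec q[i])$; otherwise $t_2/\alpha$ has some $m$ children and $\widehat f(q)_\alpha=\mathsf{Internal}(\vec q_\alpha,p_\alpha)$, where $\vec q_\alpha[j]=\widehat f(q)_{\alpha\cdot j}$ if $\alpha\cdot j$ is a prefix of some $f(i)$ and otherwise $\vec q_\alpha[j]$ is the tree of topology $t_2/(\alpha\cdot j)$ with all PIFOs empty; and $p_\alpha$ is obtained from $p$ by replacing each entry $(i,r)$ by $(j,r)$ where $\alpha\cdot j$ is a prefix of $f(i)$, deleting entries for which no such $j$ exists, keeping the order. Finally $\widehat f(q)=\widehat f(q)_\epsilon$. *)

theory Defs
  imports Main "HOL-Library.Sublist"
begin

text \<open>A PIFO over S with ranks in 'rk is a list of (element, rank) pairs in insertion order.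
  Packets are an arbitrary type 'pkt, ranks an arbitrary linear order 'rk.\<close>

type_synonym ('s, 'rk) pifo = "('s \<times> 'rk) list"

definition pifo_pop :: "('s, 'rk::linorder) pifo \<Rightarrow> ('s \<times> ('s, 'rk) pifo) option" where
  "pifo_pop p =
     (if p = [] then None
      else let r = Min (set (map snd p));
               k = (LEAST k. k < length p \<and> snd (p ! k) = r)
           in Some (fst (p ! k), take k p @ drop (Suc k) p))"

lemma size_nth_le: "i < length xs \<Longrightarrow> f (xs ! i) \<le> size_list f xs"
  by (metis nth_mem order_refl size_list_estimation')

lemma size_nth_less_Suc: "i < length xs \<Longrightarrow> f (xs ! i) < Suc (size_list f xs)"
  using size_nth_le[of i xs f] by simp


datatype topo = Star | Node "topo list"

datatype ('pkt, 'rk) ptree =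
    Leaf "('pkt, 'rk) pifo"
  | Internal "('pkt, 'rk) ptree list" "(nat, 'rk) pifo"

text \<open>Membership in PIFOTree(t); children are indexed 1..n.\<close>
fun is_ptree :: "topo \<Rightarrow> ('pkt, 'rk) ptree \<Rightarrow> bool" where
  "is_ptree Star (Leaf p) = True"
| "is_ptree (Node ts) (Internal qs p) =
     (length qs = length ts \<and> (\<forall>(i, r) \<in> set p. 1 \<le> i \<and> i \<le> length ts) \<and>
      list_all2 is_ptree ts qs)"
| "is_ptree _ _ = False"

function (sequential) pop :: "('pkt, 'rk::linorder) ptree \<Rightarrow> ('pkt \<times> ('pkt, 'rk) ptree) option" where
  "pop (Leaf p) = (case pifo_pop p of None \<Rightarrow> None | Some (pkt, p') \<Rightarrow> Some (pkt, Leaf p'))"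
| "pop (Internal qs p) =
     (case pifo_pop p of
        None \<Rightarrow> None
      | Some (i, p') \<Rightarrow>
          (if 1 \<le> i \<and> i \<le> length qs then
             (case pop (qs ! (i - 1)) of
                None \<Rightarrow> None
              | Some (pkt, q') \<Rightarrow> Some (pkt, Internal (qs[i - 1 := q']) p'))
           else None))"
  by pat_completeness auto
termination
  apply (relation "measure size")
   apply simp
  apply clarsimp
  apply (rule le_imp_less_Suc, rule trans_le_add1, rule size_nth_le)
  by simp

function (sequential) addrs :: "topo \<Rightarrow> nat list set" where
  "addrs Star = {[]}"
| "addrs (Node ts) = insert [] (\<Union> (set (map (\<lambda>i. (\<lambda>a. i # a) ` addrs (ts ! (i - 1))) [1..<Suc (length ts)])))"
  by pat_completeness auto
termination
  by (relation "measure size") (auto intro!: size_nth_less_Suc)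

fun subtopo :: "topo \<Rightarrow> nat list \<Rightarrow> topo" where
  "subtopo t [] = t"
| "subtopo (Node ts) (i # a) = (if 1 \<le> i \<and> i \<le> length ts then subtopo (ts ! (i - 1)) a else Star)"
| "subtopo Star (i # a) = Star" \<comment> \<open>never used on valid addresses\<close>

definition embedding :: "(nat list \<Rightarrow> nat list) \<Rightarrow> topo \<Rightarrow> topo \<Rightarrow> bool" where
  "embedding f t1 t2 \<longleftrightarrow>
     f ` addrs t1 \<subseteq> addrs t2 \<and>
     inj_on f (addrs t1) \<and>
     f [] = [] \<and>
     (\<forall>\<alpha> \<in> addrs t1. subtopo t1 \<alpha> = Star \<longrightarrow> subtopo t2 (f \<alpha>) = Star) \<and>
     (\<forall>\<alpha> \<in> addrs t1. \<forall>\<alpha>' \<in> addrs t1. prefix \<alpha> \<alpha>' \<longleftrightarrow> prefix (f \<alpha>) (f \<alpha>'))"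

fun empty_tree :: "topo \<Rightarrow> ('pkt, 'rk) ptree" where
  "empty_tree Star = Leaf []"
| "empty_tree (Node us) = Internal (map empty_tree us) []"

text \<open>The i-th sub-embedding: f(i a) = f(i) f_i(a).\<close>
definition sub_emb :: "(nat list \<Rightarrow> nat list) \<Rightarrow> nat \<Rightarrow> nat list \<Rightarrow> nat list" where
  "sub_emb f i a = drop (length (f [i])) (f (i # a))"

text \<open>p_alpha: relabel entry (i,r) to (j,r) where alpha j is a prefix of f(i), dropping others.\<close>
definition relabel :: "(nat list \<Rightarrow> nat list) \<Rightarrow> nat list \<Rightarrow> (nat, 'rk) pifo \<Rightarrow> (nat, 'rk) pifo" where
  "relabel f \<alpha> p =
     concat (map (\<lambda>(i, r). if strict_prefix \<alpha> (f [i]) then [(f [i] ! length \<alpha>, r)] else []) p)"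

text \<open>build u alpha f n gs p computes the tree hat-f(q)_alpha, where u = t2/alpha, n is the number
  of children of t1, gs ! (i-1) is the already lifted i-th child, and p is the root PIFO of q.\<close>
function (sequential) build ::
  "topo \<Rightarrow> nat list \<Rightarrow> (nat list \<Rightarrow> nat list) \<Rightarrow> nat \<Rightarrow> ('pkt, 'rk) ptree list \<Rightarrow> (nat, 'rk) pifo
   \<Rightarrow> ('pkt, 'rk) ptree" where
  "build u \<alpha> f n gs p =
     (if \<exists>i. 1 \<le> i \<and> i \<le> n \<and> f [i] = \<alpha> then gs ! ((THE i. 1 \<le> i \<and> i \<le> n \<and> f [i] = \<alpha>) - 1)
      else (case u of
              Star \<Rightarrow> Leaf []
            | Node us \<Rightarrow>
                Internal
                  (map (\<lambda>j. if \<exists>i. 1 \<le> i \<and> i \<le> n \<and> prefix (\<alpha> @ [j]) (f [i])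
                             then build (us ! (j - 1)) (\<alpha> @ [j]) f n gs p
                             else empty_tree (us ! (j - 1)))
                       [1..<Suc (length us)])
                  (relabel f \<alpha> p)))"
  by pat_completeness auto
termination
  apply (relation "measure (\<lambda>(u, _). size u)")
   apply simp
  by (auto intro!: size_nth_less_Suc)

function (sequential) lift :: "topo \<Rightarrow> topo \<Rightarrow> (nat list \<Rightarrow> nat list) \<Rightarrow> ('pkt, 'rk) ptree \<Rightarrow> ('pkt, 'rk) ptree" where
  "lift Star t2 f q = q"
| "lift (Node ts) t2 f (Internal qs p) =
     build t2 [] f (length ts)
       (map (\<lambda>i. lift (ts ! (i - 1)) (subtopo t2 (f [i])) (sub_emb f i) (qs ! (i - 1)))
            [1..<Suc (length ts)])
       p"
| "lift (Node ts) t2 f (Leaf p) = Leaf p" \<comment> \<open>ill-typed input, irrelevant\<close>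
  by pat_completeness auto
termination
  by (relation "measure (\<lambda>(t1, _). size t1)") (auto intro!: size_nth_less_Suc)

end

theory Submission
  imports Defs
begin

(*
  The lifted tree is assembled from the lifted children of q, placed at the addresses f(i),
  with relabelled copies of the root PIFO of q on the nodes of t2 above them. If q pops child i,
  then every node on the path from the root of t2 to f(i) pops the step towards f(i), because
  relabelling keeps the surviving entries with their ranks and in their order; nodes off this
  path keep no entry for i, so neither their PIFOs nor their subtrees change.
*)

lemma pifo_pop_Some_iff:
  "pifo_pop p = Some (x, p') \<longleftrightarrow>
     (\<exists>xs r ys. p = xs @ (x, r) # ys \<and> p' = xs @ ys \<and>
        (\<forall>e\<in>set xs. r < snd e) \<and> (\<forall>e\<in>set ys. r \<le> snd e))"
proof
  assume pop: "pifo_pop p = Some (x, p')"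
  then have "p \<noteq> []" by (simp add: pifo_pop_def split: if_splits)
  define r where "r = Min (set (map snd p))"
  define k where "k = (LEAST k. k < length p \<and> snd (p ! k) = r)"
  have "r \<in> set (map snd p)" unfolding r_def using \<open>p \<noteq> []\<close> by (intro Min_in) auto
  then obtain k0 where "k0 < length p" "snd (p ! k0) = r" by (auto simp: in_set_conv_nth)
  then have k: "k < length p" "snd (p ! k) = r"
    unfolding k_def by (metis (mono_tags, lifting) LeastI)+
  have result: "x = fst (p ! k)" "p' = take k p @ drop (Suc k) p"
    using pop \<open>p \<noteq> []\<close> unfolding pifo_pop_def r_def k_def by (auto simp: Let_def)
  have split: "p = take k p @ (x, r) # drop (Suc k) p"
    using k result(1) by (metis id_take_nth_drop prod.collapse)
  have r_le: "\<forall>e\<in>set p. r \<le> snd e" unfolding r_def using \<open>p \<noteq> []\<close> by auto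
  have "\<forall>e\<in>set (take k p). r < snd e"
  proof
    fix e assume "e \<in> set (take k p)"
    then obtain j where j: "j < k" "e = p ! j" using k by (auto simp: in_set_conv_nth)
    then have "snd (p ! j) \<noteq> r" using k(1) not_less_Least unfolding k_def by fastforce
    with j k(1) r_le show "r < snd e" by (metis le_neq_trans nth_mem order.strict_trans)
  qed
  moreover have "\<forall>e\<in>set (drop (Suc k) p). r \<le> snd e" using r_le by (meson in_set_dropD)
  ultimately show "\<exists>xs r ys. p = xs @ (x, r) # ys \<and> p' = xs @ ys \<and>
      (\<forall>e\<in>set xs. r < snd e) \<and> (\<forall>e\<in>set ys. r \<le> snd e)"
    using split result(2) by blast
next
  assume "\<exists>xs r ys. p = xs @ (x, r) # ys \<and> p' = xs @ ys \<and>
      (\<forall>e\<in>set xs. r < snd e) \<and> (\<forall>e\<in>set ys. r \<le> snd e)"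
  then obtain xs r ys where p: "p = xs @ (x, r) # ys" "p' = xs @ ys"
    and before: "\<forall>e\<in>set xs. r < snd e" and after: "\<forall>e\<in>set ys. r \<le> snd e"
    by blast
  have "Min (set (map snd p)) = r"
    using before after unfolding p by (intro Min_eqI) (auto intro: less_imp_le)
  moreover have "(LEAST k. k < length p \<and> snd (p ! k) = r) = length xs"
  proof (rule Least_equality)
    fix k assume "k < length p \<and> snd (p ! k) = r"
    then show "length xs \<le> k"
      using before unfolding p by (metis leI less_irrefl nth_append nth_mem)
  qed (simp add: p)
  ultimately show "pifo_pop p = Some (x, p')" unfolding pifo_pop_def p by (simp add: Let_def)
qed

lemma pifo_pop_map_filter:
  assumes "pifo_pop p = Some (x, p')" and "P x"
  shows "pifo_pop (map (apfst g) (filter (P \<circ> fst) p)) =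
    Some (g x, map (apfst g) (filter (P \<circ> fst) p'))"
proof -
  obtain xs r ys where "p = xs @ (x, r) # ys" "p' = xs @ ys"
    and "\<forall>e\<in>set xs. r < snd e" "\<forall>e\<in>set ys. r \<le> snd e"
    using assms(1) unfolding pifo_pop_Some_iff by blast
  then show ?thesis unfolding pifo_pop_Some_iff using assms(2)
    by (intro exI[of _ "map (apfst g) (filter (P \<circ> fst) xs)"] exI[of _ r]
        exI[of _ "map (apfst g) (filter (P \<circ> fst) ys)"]) auto
qed

lemma filter_pifo_pop_skip:
  assumes "pifo_pop p = Some (x, p')" and "\<not> P x"
  shows "filter (P \<circ> fst) p' = filter (P \<circ> fst) p"
  using assms unfolding pifo_pop_Some_iff by auto

lemma relabel_conv:
  "relabel f \<alpha> p =
     map (apfst (\<lambda>i. f [i] ! length \<alpha>)) (filter ((\<lambda>i. strict_prefix \<alpha> (f [i])) \<circ> fst) p)"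
  unfolding relabel_def by (induction p) auto

lemma pifo_pop_relabel:
  assumes "pifo_pop p = Some (i, p')" and "strict_prefix \<alpha> (f [i])"
  shows "pifo_pop (relabel f \<alpha> p) = Some (f [i] ! length \<alpha>, relabel f \<alpha> p')"
  unfolding relabel_conv
  using pifo_pop_map_filter[where P = "\<lambda>i. strict_prefix \<alpha> (f [i])", OF assms] .

lemma relabel_pifo_pop_skip:
  assumes "pifo_pop p = Some (i, p')" and "\<not> strict_prefix \<alpha> (f [i])"
  shows "relabel f \<alpha> p' = relabel f \<alpha> p"
  unfolding relabel_conv
  using filter_pifo_pop_skip[where P = "\<lambda>i. strict_prefix \<alpha> (f [i])", OF assms] by simp

declare upt_Suc [simp del]

lemma map_upt_list_update:
  assumes "1 \<le> j" "j \<le> m" and "\<And>k. 1 \<le> k \<Longrightarrow> k \<le> m \<Longrightarrow> k \<noteq> j \<Longrightarrow> g k = h k"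
  shows "(map g [1..<Suc m])[j - 1 := h j] = map h [1..<Suc m]"
  using assms by (intro nth_equalityI) (auto simp: nth_list_update)

lemma pop_Internal_map_upt:
  assumes "pifo_pop p = Some (j, p')" "1 \<le> j" "j \<le> m"
    and "pop (g j) = Some (pkt, h j)"
    and "\<And>k. 1 \<le> k \<Longrightarrow> k \<le> m \<Longrightarrow> k \<noteq> j \<Longrightarrow> g k = h k"
  shows "pop (Internal (map g [1..<Suc m]) p) = Some (pkt, Internal (map h [1..<Suc m]) p')"
  using assms map_upt_list_update[of j m g h] by simp

lemma Nil_in_addrs [simp]: "[] \<in> addrs t"
  by (cases t) auto

lemma Cons_in_addrs_iff:
  "i # a \<in> addrs t \<longleftrightarrow> (\<exists>ts. t = Node ts \<and> 1 \<le> i \<and> i \<le> length ts \<and> a \<in> addrs (ts ! (i - 1)))"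
  by (cases t) (auto simp: less_Suc_eq_le)

declare addrs.simps(2) [simp del]

lemma subtopo_Star [simp]: "subtopo Star a = Star"
  by (cases a) auto

lemma subtopo_append: "subtopo t (a @ b) = subtopo (subtopo t a) b"
  by (induction t a rule: subtopo.induct) auto

lemma append_in_addrs_iff: "a @ b \<in> addrs t \<longleftrightarrow> a \<in> addrs t \<and> b \<in> addrs (subtopo t a)"
  by (induction a arbitrary: t) (auto simp: Cons_in_addrs_iff)

lemma append_Cons_in_addrs_subtopo:
  assumes "\<alpha> @ j # c \<in> addrs t"
  obtains us where "subtopo t \<alpha> = Node us" "1 \<le> j" "j \<le> length us"
    and "subtopo t (\<alpha> @ [j]) = us ! (j - 1)"
  using assms by (auto simp: append_in_addrs_iff Cons_in_addrs_iff subtopo_append)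

lemma embedding_in_addrs: "embedding f t1 t2 \<Longrightarrow> \<alpha> \<in> addrs t1 \<Longrightarrow> f \<alpha> \<in> addrs t2"
  unfolding embedding_def by blast

lemma embedding_inj_on: "embedding f t1 t2 \<Longrightarrow> inj_on f (addrs t1)"
  unfolding embedding_def by blast

lemma embedding_subtopo_Star:
  "embedding f t1 t2 \<Longrightarrow> \<alpha> \<in> addrs t1 \<Longrightarrow> subtopo t1 \<alpha> = Star \<Longrightarrow> subtopo t2 (f \<alpha>) = Star"
  unfolding embedding_def by blast

lemma embedding_prefix_iff:
  "embedding f t1 t2 \<Longrightarrow> \<alpha> \<in> addrs t1 \<Longrightarrow> \<alpha>' \<in> addrs t1 \<Longrightarrow> prefix (f \<alpha>) (f \<alpha>') \<longleftrightarrow> prefix \<alpha> \<alpha>'"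
  unfolding embedding_def by blast

lemma embedding_Cons:
  assumes "embedding f (Node ts) t2" "1 \<le> i" "i \<le> length ts" "a \<in> addrs (ts ! (i - 1))"
  shows "f (i # a) = f [i] @ sub_emb f i a"
proof -
  have "prefix (f [i]) (f (i # a))"
    using assms by (subst embedding_prefix_iff) (auto simp: Cons_in_addrs_iff)
  then show ?thesis unfolding sub_emb_def prefix_def by auto
qed

lemma embedding_sub_emb:
  assumes emb: "embedding f (Node ts) t2" and i: "1 \<le> i" "i \<le> length ts"
  shows "embedding (sub_emb f i) (ts ! (i - 1)) (subtopo t2 (f [i]))"
proof -
  let ?t = "ts ! (i - 1)"
  have addr: "i # a \<in> addrs (Node ts)" if "a \<in> addrs ?t" for a
    using that i by (simp add: Cons_in_addrs_iff)
  note f_Cons = embedding_Cons[OF emb i]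
  show ?thesis unfolding embedding_def
  proof (intro conjI ballI subsetI impI)
    fix x assume "x \<in> sub_emb f i ` addrs ?t"
    then obtain a where a: "a \<in> addrs ?t" "x = sub_emb f i a" by auto
    have "f [i] @ x \<in> addrs t2"
      using embedding_in_addrs[OF emb addr[OF a(1)]] f_Cons[OF a(1)] a(2) by simp
    then show "x \<in> addrs (subtopo t2 (f [i]))" by (simp add: append_in_addrs_iff)
  next
    show "inj_on (sub_emb f i) (addrs ?t)"
    proof (rule inj_onI)
      fix a b assume a: "a \<in> addrs ?t" and b: "b \<in> addrs ?t"
        and "sub_emb f i a = sub_emb f i b"
      then have "f (i # a) = f (i # b)" by (simp only: f_Cons[OF a] f_Cons[OF b])
      then show "a = b" using inj_onD[OF embedding_inj_on[OF emb] _ addr[OF a] addr[OF b]] by simp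
    qed
  next
    show "sub_emb f i [] = []" unfolding sub_emb_def by simp
  next
    fix a assume a: "a \<in> addrs ?t" and "subtopo ?t a = Star"
    then have "subtopo (Node ts) (i # a) = Star" using i by simp
    then have "subtopo t2 (f (i # a)) = Star" using embedding_subtopo_Star[OF emb addr[OF a]] by blast
    then show "subtopo (subtopo t2 (f [i])) (sub_emb f i a) = Star"
      by (simp add: f_Cons[OF a] subtopo_append)
  next
    fix a b assume a: "a \<in> addrs ?t" and b: "b \<in> addrs ?t"
    have "prefix a b \<longleftrightarrow> prefix (f (i # a)) (f (i # b))"
      using embedding_prefix_iff[OF emb addr[OF a] addr[OF b]] by simp
    then show "prefix a b \<longleftrightarrow> prefix (sub_emb f i a) (sub_emb f i b)"
      by (simp only: f_Cons[OF a] f_Cons[OF b] same_prefix_prefix)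
  qed
qed

definition child_prefix_free :: "(nat list \<Rightarrow> nat list) \<Rightarrow> nat \<Rightarrow> bool" where
  "child_prefix_free f n \<longleftrightarrow> (\<forall>j\<in>{1..n}. \<forall>k\<in>{1..n}. prefix (f [j]) (f [k]) \<longrightarrow> j = k)"

lemma child_prefix_freeD:
  "child_prefix_free f n \<Longrightarrow> 1 \<le> j \<Longrightarrow> j \<le> n \<Longrightarrow> 1 \<le> k \<Longrightarrow> k \<le> n \<Longrightarrow>
    prefix (f [j]) (f [k]) \<Longrightarrow> j = k"
  unfolding child_prefix_free_def by (meson atLeastAtMost_iff)

lemma embedding_child_prefix_free:
  assumes "embedding f (Node ts) t2"
  shows "child_prefix_free f (length ts)"
  unfolding child_prefix_free_def
proof (intro ballI impI)
  fix j k assume "j \<in> {1..length ts}" "k \<in> {1..length ts}" "prefix (f [j]) (f [k])"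
  then have "prefix [j] [k]" using embedding_prefix_iff[OF assms, of "[j]" "[k]"]
    by (simp add: Cons_in_addrs_iff)
  then show "j = k" by simp
qed

declare build.simps [simp del]

lemma build_child:
  assumes free: "child_prefix_free f n" and j: "1 \<le> j" "j \<le> n" "f [j] = \<alpha>"
  shows "build u \<alpha> f n gs p = gs ! (j - 1)"
proof -
  have ex: "\<exists>i. 1 \<le> i \<and> i \<le> n \<and> f [i] = \<alpha>" using j by blast
  have "(THE i. 1 \<le> i \<and> i \<le> n \<and> f [i] = \<alpha>) = j"
  proof (rule the_equality)
    fix i assume "1 \<le> i \<and> i \<le> n \<and> f [i] = \<alpha>"
    then show "i = j" using child_prefix_freeD[OF free _ _ j(1,2)] j(3) by (metis prefix_order.refl)
  qed (use j in simp)
  then show ?thesis by (subst build.simps) (simp only: ex if_True)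
qed

lemma build_Node_nonchild:
  assumes "\<nexists>i. 1 \<le> i \<and> i \<le> n \<and> f [i] = \<alpha>"
  shows "build (Node us) \<alpha> f n gs p =
     Internal (map (\<lambda>j. if \<exists>i. 1 \<le> i \<and> i \<le> n \<and> prefix (\<alpha> @ [j]) (f [i])
                        then build (us ! (j - 1)) (\<alpha> @ [j]) f n gs p
                        else empty_tree (us ! (j - 1)))
                   [1..<Suc (length us)]) (relabel f \<alpha> p)"
  by (subst build.simps) (simp only: assms if_False topo.case)

lemma build_Star_nonchild:
  assumes "\<nexists>i. 1 \<le> i \<and> i \<le> n \<and> f [i] = \<alpha>"
  shows "build Star \<alpha> f n gs p = Leaf []"
  by (subst build.simps) (simp only: assms if_False topo.case)

lemma build_pop_off_path:
  assumes pop: "pifo_pop p = Some (i, p')" and "1 \<le> i" and free: "child_prefix_free f n"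
    and "\<not> prefix \<beta> (f [i])" "\<not> prefix (f [i]) \<beta>"
  shows "build u \<beta> f n (gs[i - 1 := g']) p' = build u \<beta> f n gs p"
proof -
  have at_child: "build u \<beta> f n (gs[i - 1 := g']) p' = build u \<beta> f n gs p"
    if hit: "\<exists>j. 1 \<le> j \<and> j \<le> n \<and> f [j] = \<beta>" and "\<not> prefix \<beta> (f [i])" for u \<beta>
  proof -
    obtain j where j: "1 \<le> j" "j \<le> n" "f [j] = \<beta>" using hit by blast
    with \<open>\<not> prefix \<beta> (f [i])\<close> have "j \<noteq> i" by auto
    with j(1) \<open>1 \<le> i\<close> have "j - 1 \<noteq> i - 1" by arith
    then show ?thesis by (simp add: build_child[OF free j])
  qed
  show ?thesis
    using assms(4,5)
  proof (induction u arbitrary: \<beta>)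
    case Star
    show ?case
    proof (cases "\<exists>j. 1 \<le> j \<and> j \<le> n \<and> f [j] = \<beta>")
      case True
      then show ?thesis using at_child Star.prems by blast
    next
      case False
      then show ?thesis by (simp only: build_Star_nonchild[OF False])
    qed
  next
    case (Node us)
    show ?case
    proof (cases "\<exists>j. 1 \<le> j \<and> j \<le> n \<and> f [j] = \<beta>")
      case True
      then show ?thesis using at_child Node.prems by blast
    next
      case False
      have "relabel f \<beta> p' = relabel f \<beta> p"
        using relabel_pifo_pop_skip[OF pop] Node.prems by (simp add: strict_prefix_def)
      moreover have "build (us ! (j - 1)) (\<beta> @ [j]) f n (gs[i - 1 := g']) p' =
          build (us ! (j - 1)) (\<beta> @ [j]) f n gs p" if "j \<in> set [1..<Suc (length us)]" for j
      proof (rule Node.IH)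
        show "us ! (j - 1) \<in> set us" using that by auto
        show "\<not> prefix (\<beta> @ [j]) (f [i])" using Node.prems(1) by (auto dest: prefix_snocD)
        show "\<not> prefix (f [i]) (\<beta> @ [j])" using Node.prems by (auto intro: prefixI)
      qed
      ultimately show ?thesis unfolding build_Node_nonchild[OF False] by (auto intro!: map_cong)
    qed
  qed
qed

lemma pop_build_on_path:
  fixes gs :: "('pkt, 'rk::linorder) ptree list"
  assumes pop: "pifo_pop p = Some (i, p')" and i: "1 \<le> i" "i \<le> n" and len: "length gs = n"
    and child: "pop (gs ! (i - 1)) = Some (pkt, g')"
    and free: "child_prefix_free f n" and addr: "f [i] \<in> addrs t2"
    and "f [i] = \<alpha> @ zs"
  shows "pop (build (subtopo t2 \<alpha>) \<alpha> f n gs p) =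
    Some (pkt, build (subtopo t2 \<alpha>) \<alpha> f n (gs[i - 1 := g']) p')"
  using \<open>f [i] = \<alpha> @ zs\<close>
proof (induction zs arbitrary: \<alpha>)
  case Nil
  then show ?case using child i len by (simp add: build_child[OF free i])
next
  case (Cons j c)
  obtain us where us: "subtopo t2 \<alpha> = Node us" "1 \<le> j" "j \<le> length us"
    "subtopo t2 (\<alpha> @ [j]) = us ! (j - 1)"
    using addr unfolding Cons.prems by (rule append_Cons_in_addrs_subtopo)
  have nonchild: "\<nexists>k. 1 \<le> k \<and> k \<le> n \<and> f [k] = \<alpha>"
  proof
    assume "\<exists>k. 1 \<le> k \<and> k \<le> n \<and> f [k] = \<alpha>"
    then obtain k where k: "1 \<le> k" "k \<le> n" "f [k] = \<alpha>" by blast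
    then have "k = i" using child_prefix_freeD[OF free k(1,2) i] Cons.prems by simp
    then show False using k Cons.prems by simp
  qed
  define child_tree where "child_tree G P k =
    (if \<exists>m. 1 \<le> m \<and> m \<le> n \<and> prefix (\<alpha> @ [k]) (f [m])
     then build (us ! (k - 1)) (\<alpha> @ [k]) f n G P else empty_tree (us ! (k - 1)))"
    for G :: "('pkt, 'rk) ptree list" and P k
  have "pop (Internal (map (child_tree gs p) [1..<Suc (length us)]) (relabel f \<alpha> p)) =
    Some (pkt, Internal (map (child_tree (gs[i - 1 := g']) p') [1..<Suc (length us)]) (relabel f \<alpha> p'))"
  proof (rule pop_Internal_map_upt)
    have "strict_prefix \<alpha> (f [i])" using Cons.prems by (simp add: strict_prefix_def)
    then show "pifo_pop (relabel f \<alpha> p) = Some (j, relabel f \<alpha> p')"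
      using pifo_pop_relabel[OF pop] Cons.prems by simp
    have "\<exists>m. 1 \<le> m \<and> m \<le> n \<and> prefix (\<alpha> @ [j]) (f [m])"
      using i Cons.prems by auto
    then show "pop (child_tree gs p j) = Some (pkt, child_tree (gs[i - 1 := g']) p' j)"
      unfolding child_tree_def using Cons.IH[of "\<alpha> @ [j]"] Cons.prems us(4) by simp
    show "child_tree gs p k = child_tree (gs[i - 1 := g']) p' k" if "k \<noteq> j" for k
    proof -
      have "build (us ! (k - 1)) (\<alpha> @ [k]) f n gs p =
          build (us ! (k - 1)) (\<alpha> @ [k]) f n (gs[i - 1 := g']) p'"
        by (rule build_pop_off_path[OF pop i(1) free, symmetric]) (use that Cons.prems in simp)+
      then show ?thesis unfolding child_tree_def by (intro if_cong) simp_all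
    qed
  qed (use us in auto)
  then show ?case unfolding us(1) build_Node_nonchild[OF nonchild] child_tree_def .
qed

lemma pop_build_root:
  fixes gs :: "('pkt, 'rk::linorder) ptree list"
  assumes emb: "embedding f (Node ts) t2"
    and "pifo_pop p = Some (i, p')" "1 \<le> i" "i \<le> length ts" "length gs = length ts"
    and "pop (gs ! (i - 1)) = Some (pkt, g')"
  shows "pop (build t2 [] f (length ts) gs p) =
    Some (pkt, build t2 [] f (length ts) (gs[i - 1 := g']) p')"
proof -
  have "f [i] \<in> addrs t2"
    using embedding_in_addrs[OF emb] \<open>1 \<le> i\<close> \<open>i \<le> length ts\<close> by (simp add: Cons_in_addrs_iff)
  then show ?thesis
    using pop_build_on_path[OF assms(2-6) embedding_child_prefix_free[OF emb], of t2 "[]"] by simp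
qed

theorem lemma5p7:
  fixes t1 t2 :: topo
    and f :: "nat list \<Rightarrow> nat list"
    and q q' :: "('pkt, 'rk::linorder) ptree"
    and pkt :: 'pkt
  assumes "embedding f t1 t2"
    and "is_ptree t1 q"
    and "pop q = Some (pkt, q')"
  shows "pop (lift t1 t2 f q) = Some (pkt, lift t1 t2 f q')"
  using assms
proof (induction t1 t2 f q arbitrary: pkt q' rule: lift.induct)
  case (2 ts t2 f qs p)
  obtain i p' c where pop: "pifo_pop p = Some (i, p')" and i: "1 \<le> i" "i \<le> length ts"
    and child: "pop (qs ! (i - 1)) = Some (pkt, c)" and q': "q' = Internal (qs[i - 1 := c]) p'"
    using "2.prems"(2,3) by (auto split: option.splits if_splits)
  have len: "length qs = length ts" using "2.prems"(2) by simp
  define lift_child where "lift_child Q k =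
    lift (ts ! (k - 1)) (subtopo t2 (f [k])) (sub_emb f k) (Q ! (k - 1))"
    for Q :: "('pkt, 'rk) ptree list" and k
  have "pop (lift_child qs i) = Some (pkt, lift_child (qs[i - 1 := c]) i)"
    unfolding lift_child_def
    using "2.IH"[OF _ embedding_sub_emb[OF "2.prems"(1) i] _ child] "2.prems"(2) i len
    by (simp add: list_all2_conv_all_nth set_upt)
  moreover have
    "(map (lift_child qs) [1..<Suc (length ts)])[i - 1 := lift_child (qs[i - 1 := c]) i] =
      map (lift_child (qs[i - 1 := c])) [1..<Suc (length ts)]"
    using i by (intro map_upt_list_update) (auto simp: lift_child_def)
  moreover have "lift (Node ts) t2 f (Internal Q P) =
      build t2 [] f (length ts) (map (lift_child Q) [1..<Suc (length ts)]) P" for Q P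
    unfolding lift_child_def by simp
  ultimately show ?case
    using pop_build_root[OF "2.prems"(1) pop i, of "map (lift_child qs) [1..<Suc (length ts)]"] i
    unfolding q' by simp
qed simp_all

end
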